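(* Let $W$ be a $p$-locally dense, $p$-regular graphon. Then the kernel $W-p$ is positive semidefinite.
   Context: Let $(\Omega,\mu)$ be an atomless standard probability space. A graphon is a symmetric measurable $W:\Omega\times\Omega\to[0,1]$; it is $p$-regular if $\int_\Omega W(x,y)\,dy=p$ for a.e. $x$, and $p$-locally dense if $\iint_{U\times U}W\ge p\,\mu(U)^2$ for every measurable $U\subseteq\Omega$. A kernel (bounded symmetric measurable $K:\Omega\times\Omega\to\mathbb R$) is positive semidefinite if $\iint f(x)K(x,y)f(y)\,dx\,dy\ge0$ for every bounded measurable $f:\Omega\to\mathbb R$. *)

theory Defs
  imports "HOL-Probability.Probability"
begin

text \<open>Standard probability space: a probability measure on a standard Borel space,
  i.e. a Polish space with its Borel sigma-algebra.\<close>
definition standard_prob_space :: "'a::polish_space measure \<Rightarrow> bool" where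
  "standard_prob_space M \<longleftrightarrow> prob_space M \<and> sets M = sets borel"

definition atomless :: "'a measure \<Rightarrow> bool" where
  "atomless M \<longleftrightarrow> (\<forall>A\<in>sets M. measure M A > 0 \<longrightarrow>
      (\<exists>B\<in>sets M. B \<subseteq> A \<and> 0 < measure M B \<and> measure M B < measure M A))"

definition graphon :: "'a measure \<Rightarrow> ('a \<Rightarrow> 'a \<Rightarrow> real) \<Rightarrow> bool" where
  "graphon M W \<longleftrightarrow> (\<lambda>z. W (fst z) (snd z)) \<in> borel_measurable (M \<Otimes>\<^sub>M M)
      \<and> (\<forall>x\<in>space M. \<forall>y\<in>space M. W x y = W y x \<and> 0 \<le> W x y \<and> W x y \<le> 1)"

definition regular_graphon :: "'a measure \<Rightarrow> real \<Rightarrow> ('a \<Rightarrow> 'a \<Rightarrow> real) \<Rightarrow> bool" where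
  "regular_graphon M p W \<longleftrightarrow> (AE x in M. (\<integral>y. W x y \<partial>M) = p)"

definition locally_dense :: "'a measure \<Rightarrow> real \<Rightarrow> ('a \<Rightarrow> 'a \<Rightarrow> real) \<Rightarrow> bool" where
  "locally_dense M p W \<longleftrightarrow> (\<forall>U\<in>sets M.
      (\<integral>z. indicator (U \<times> U) z * W (fst z) (snd z) \<partial>(M \<Otimes>\<^sub>M M)) \<ge> p * (measure M U)\<^sup>2)"

definition kernel :: "'a measure \<Rightarrow> ('a \<Rightarrow> 'a \<Rightarrow> real) \<Rightarrow> bool" where
  "kernel M K \<longleftrightarrow> (\<lambda>z. K (fst z) (snd z)) \<in> borel_measurable (M \<Otimes>\<^sub>M M)
      \<and> (\<exists>B. \<forall>x\<in>space M. \<forall>y\<in>space M. \<bar>K x y\<bar> \<le> B)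
      \<and> (\<forall>x\<in>space M. \<forall>y\<in>space M. K x y = K y x)"

definition psd_kernel :: "'a measure \<Rightarrow> ('a \<Rightarrow> 'a \<Rightarrow> real) \<Rightarrow> bool" where
  "psd_kernel M K \<longleftrightarrow> kernel M K \<and>
     (\<forall>f \<in> borel_measurable M. (\<exists>B. \<forall>x\<in>space M. \<bar>f x\<bar> \<le> B) \<longrightarrow>
        (\<integral>z. f (fst z) * K (fst z) (snd z) * f (snd z) \<partial>(M \<Otimes>\<^sub>M M)) \<ge> 0)"

end

theory Submission
  imports Defs
begin

(* Write K = W - p. By local density the quadratic form of K is nonnegative on indicator
   functions. For a step function with values c_i in [0,1] on pieces R_i, the form is therefore
   a function of (c_i) that is affine in each c_i separately and nonnegative at the vertices of
   the cube, hence nonnegative on the whole cube, up to the diagonal terms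
   (c_i - c_i^2) K(R_i x R_i) whose sum is at most (1 + |p|) e when every piece has measure at
   most e. Atomlessness provides arbitrarily fine partitions, so by approximation the form is
   nonnegative on every measurable function with values in [0,1]. A bounded f is an affine
   image 2b g - b of such a g, and the cross terms of the expansion vanish because p-regularity
   says that K has zero row integrals. *)

(* The form is affine in each coordinate c k, so its minimum over the cube is attained at a
   vertex, where it is a sum over a subset. *)
lemma cube_form_nonneg:
  fixes K :: "'i \<Rightarrow> 'i \<Rightarrow> real" and c :: "'i \<Rightarrow> real"
  assumes "finite I"
    and subset_sums: "\<And>S. S \<subseteq> I \<Longrightarrow> 0 \<le> (\<Sum>a\<in>S. \<Sum>b\<in>S. K a b)"
    and c: "\<And>a. a \<in> I \<Longrightarrow> 0 \<le> c a \<and> c a \<le> 1"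
  shows "0 \<le> (\<Sum>a\<in>I. \<Sum>b\<in>I. (if a = b then c a else c a * c b) * K a b)"
proof -
  define F where "F c = (\<Sum>a\<in>I. \<Sum>b\<in>I. (if a = b then c a else c a * c b) * K a b)"
    for c :: "'i \<Rightarrow> real"
  have affine: "F c = (1 - c k) * F (c(k := 0)) + c k * F (c(k := 1))" for c k
  proof -
    have "(if a = b then c a else c a * c b) * K a b =
        (1 - c k) * ((if a = b then (c(k := 0)) a else (c(k := 0)) a * (c(k := 0)) b) * K a b) +
        c k * ((if a = b then (c(k := 1)) a else (c(k := 1)) a * (c(k := 1)) b) * K a b)" for a b
      by (cases "a = k"; cases "b = k"; cases "a = b") (auto simp: algebra_simps)
    then show ?thesis
      unfolding F_def by (simp add: sum.distrib sum_distrib_left)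
  qed
  have vertex: "0 \<le> F c" if binary: "\<And>a. a \<in> I \<Longrightarrow> c a = 0 \<or> c a = 1" for c
  proof -
    define S where "S = {a\<in>I. c a = 1}"
    have "S \<subseteq> I"
      by (simp add: S_def)
    have "(\<Sum>b\<in>I. (if a = b then c a else c a * c b) * K a b) = (if a \<in> S then \<Sum>b\<in>S. K a b else 0)"
      if "a \<in> I" for a
      using that unfolding S_def
      by (auto simp: sum.inter_filter[OF \<open>finite I\<close>] intro!: sum.cong sum.neutral dest: binary)
    then have "F c = (\<Sum>a\<in>I. if a \<in> S then \<Sum>b\<in>S. K a b else 0)"
      unfolding F_def by (intro sum.cong refl)
    also have "\<dots> = (\<Sum>a\<in>S. \<Sum>b\<in>S. K a b)"
      using \<open>finite I\<close> \<open>S \<subseteq> I\<close> by (simp add: sum.If_cases Int_absorb1)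
    also have "\<dots> \<ge> 0"
      by (rule subset_sums) (auto simp: S_def)
    finally show ?thesis .
  qed
  have "0 \<le> F c"
    if "finite J" "J \<subseteq> I" "\<And>a. a \<in> I \<Longrightarrow> 0 \<le> c a \<and> c a \<le> 1"
      "\<And>a. a \<in> I - J \<Longrightarrow> c a = 0 \<or> c a = 1" for J c
    using that
  proof (induction J arbitrary: c rule: finite_induct)
    case empty
    then show ?case by (intro vertex) auto
  next
    case (insert k J)
    have "0 \<le> F (c(k := v))" if "v = 0 \<or> v = 1" for v
      using insert.hyps insert.prems that by (intro insert.IH) auto
    moreover have "0 \<le> c k" "c k \<le> 1"
      using insert by auto
    ultimately show ?case
      unfolding affine[of c k] by simp
  qed
  then show ?thesis
    using \<open>finite I\<close> c unfolding F_def by blast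
qed

definition finite_partition :: "'a measure \<Rightarrow> 'i set \<Rightarrow> ('i \<Rightarrow> 'a set) \<Rightarrow> bool" where
  "finite_partition M I R \<longleftrightarrow> finite I \<and> (\<forall>i\<in>I. R i \<in> sets M) \<and> disjoint_family_on R I
     \<and> (\<Union>i\<in>I. R i) = space M"

definition has_fine_partitions :: "'a measure \<Rightarrow> bool" where
  "has_fine_partitions M \<longleftrightarrow>
     (\<forall>e>0. \<exists>N R. finite_partition M {..<N::nat} R \<and> (\<forall>j<N. measure M (R j) \<le> e))"

lemma finite_partition_refine:
  assumes "finite_partition M I R" "finite_partition M J S"
  shows "finite_partition M (I \<times> J) (\<lambda>(i, j). R i \<inter> S j)"
proof -
  have "disjoint_family_on (\<lambda>(i, j). R i \<inter> S j) (I \<times> J)"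
    unfolding disjoint_family_on_def
  proof (intro ballI impI)
    fix a b assume "a \<in> I \<times> J" "b \<in> I \<times> J" "a \<noteq> b"
    then obtain i j i' j' where ij: "a = (i, j)" "b = (i', j')" "i \<in> I" "j \<in> J" "i' \<in> I" "j' \<in> J"
      and "i \<noteq> i' \<or> j \<noteq> j'"
      by auto
    then have "R i \<inter> R i' = {} \<or> S j \<inter> S j' = {}"
      using assms unfolding finite_partition_def by (metis disjoint_family_onD)
    then show "(case a of (i, j) \<Rightarrow> R i \<inter> S j) \<inter> (case b of (i, j) \<Rightarrow> R i \<inter> S j) = {}"
      unfolding ij by auto
  qed
  moreover have "(\<Union>(i, j)\<in>I \<times> J. R i \<inter> S j) = (\<Union>i\<in>I. R i) \<inter> (\<Union>j\<in>J. S j)"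
    by auto
  ultimately show ?thesis
    using assms unfolding finite_partition_def by auto
qed

lemma finite_partition_level_sets:
  fixes \<phi> :: "'a \<Rightarrow> nat"
  assumes [measurable]: "\<phi> \<in> measurable M (count_space UNIV)"
    and "\<And>x. x \<in> space M \<Longrightarrow> \<phi> x \<le> n"
  shows "finite_partition M {..n} (\<lambda>k. {x \<in> space M. \<phi> x = k})"
  using assms(2) unfolding finite_partition_def disjoint_family_on_def by auto

lemma finite_partition_step_function:
  fixes c :: "'i \<Rightarrow> real"
  assumes "finite_partition M I R" "x \<in> space M"
    and "\<And>i x. i \<in> I \<Longrightarrow> x \<in> R i \<Longrightarrow> h x = c i"
  shows "h x = (\<Sum>i\<in>I. c i * indicator (R i) x)"
proof -
  obtain i where i: "i \<in> I" "x \<in> R i"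
    using assms(1,2) unfolding finite_partition_def by auto
  have "(\<Sum>j\<in>I. c j * indicator (R j) x) = (\<Sum>j\<in>I. if j = i then c i else 0)"
    using assms(1) i unfolding finite_partition_def disjoint_family_on_def
    by (intro sum.cong refl) (auto simp: indicator_def)
  then show ?thesis
    using assms(1,3) i unfolding finite_partition_def by simp
qed

lemma (in finite_measure) finite_partition_of_small_cover:
  fixes A :: "nat \<Rightarrow> 'a set"
  assumes A: "range A \<subseteq> sets M" "(\<Union>j. A j) = space M" "\<And>j. measure M (A j) \<le> e"
    and "0 < e"
  shows "\<exists>N R. finite_partition M {..<N::nat} R \<and> (\<forall>j<N. measure M (R j) \<le> e)"
proof -
  have "incseq (\<lambda>N. \<Union>j<N. A j)"
    by (intro monoI UN_mono) auto
  then have "(\<lambda>N. measure M (\<Union>j<N. A j)) \<longlonglongrightarrow> measure M (\<Union>N. \<Union>j<N. A j)"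
    using A by (intro finite_Lim_measure_incseq) auto
  moreover have "(\<Union>N. \<Union>j<N. A j) = space M"
    using A(2) by blast
  ultimately have "\<forall>\<^sub>F N in sequentially. measure M (space M) - e < measure M (\<Union>j<N. A j)"
    using \<open>0 < e\<close> by (intro order_tendstoD) auto
  then obtain N where N: "measure M (space M) - e < measure M (\<Union>j<N. A j)"
    by (meson eventually_sequentially order.refl)
  \<comment> \<open>The first N sets cover all but measure e of the space; the rest becomes one more piece.\<close>
  define A' where "A' j = (if j < N then A j else space M - (\<Union>j<N. A j))" for j
  have A'_sets: "range A' \<subseteq> sets M"
    using A by (auto simp: A'_def)
  have "finite_partition M {..<Suc N} (disjointed A')"
  proof -
    have "(\<Union>j<Suc N. disjointed A' j) = (\<Union>j<Suc N. A' j)"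
      using finite_UN_disjointed_eq[of A' "Suc N"] by (simp add: atLeast0LessThan)
    also have "\<dots> = space M"
      using A by (auto simp: A'_def lessThan_Suc)
    finally have "(\<Union>j<Suc N. disjointed A' j) = space M" .
    moreover have "disjoint_family_on (disjointed A') {..<Suc N}"
      using disjoint_family_disjointed disjoint_family_on_mono subset_UNIV by metis
    ultimately show ?thesis
      unfolding finite_partition_def using sets.range_disjointed_sets[OF A'_sets] by auto
  qed
  moreover have "measure M (disjointed A' j) \<le> e" if "j < Suc N" for j
  proof -
    have "measure M (disjointed A' j) \<le> measure M (A' j)"
      using A'_sets by (intro finite_measure_mono disjointed_subset) auto
    moreover have "measure M (A' j) \<le> e"
    proof (cases "j < N")
      case False
      have "(\<Union>j<N. A j) \<in> sets M"
        using A by auto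
      then have "measure M (A' j) = measure M (space M) - measure M (\<Union>j<N. A j)"
        using False by (simp add: A'_def finite_measure_Diff sets.sets_into_space)
      then show ?thesis
        using N by simp
    qed (simp add: A'_def A(3))
    ultimately show ?thesis by simp
  qed
  ultimately show ?thesis by blast
qed

lemma atomless_measure_singleton:
  assumes "atomless M" "{x} \<in> sets M"
  shows "measure M {x} = 0"
proof (rule ccontr)
  assume "measure M {x} \<noteq> 0"
  then have "0 < measure M {x}"
    using measure_nonneg[of M "{x}"] by linarith
  then obtain B where "B \<subseteq> {x}" "0 < measure M B" "measure M B < measure M {x}"
    using assms unfolding atomless_def by blast
  then show False
    using subset_singletonD[of B x] by auto
qed

lemma small_measure_ball:
  fixes M :: "'a::metric_space measure"
  assumes "finite_measure M" "sets M = sets borel" "measure M {x} = 0" "0 < e"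
  shows "\<exists>r>0. measure M (ball x r) \<le> e"
proof -
  interpret finite_measure M by fact
  define B where "B n = ball x (1 / Suc n)" for n
  have "decseq B"
    unfolding B_def by (intro decseq_SucI subset_ball) (simp add: field_simps)
  moreover have "range B \<subseteq> sets M"
    unfolding assms(2) B_def by auto
  ultimately have "(\<lambda>n. measure M (B n)) \<longlonglongrightarrow> measure M (\<Inter>n. B n)"
    by (intro finite_Lim_measure_decseq)
  moreover have "(\<Inter>n. B n) = {x}"
  proof safe
    fix y assume "y \<in> (\<Inter>n. B n)"
    then have y: "dist x y < 1 / Suc n" for n
      by (auto simp: B_def)
    show "y = x"
    proof (rule ccontr)
      assume "y \<noteq> x"
      then obtain n where "1 / Suc n < dist x y"
        using nat_approx_posE[of "dist x y"] by auto
      with y[of n] show False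
        by linarith
    qed
  qed (auto simp: B_def)
  ultimately have "\<forall>\<^sub>F n in sequentially. measure M (B n) < e"
    using assms(3,4) by (intro order_tendstoD) auto
  then obtain n where "measure M (B n) < e"
    by (meson eventually_sequentially order.refl)
  then show ?thesis
    unfolding B_def by (intro exI[of _ "1 / Suc n"]) auto
qed

lemma standard_atomless_has_fine_partitions:
  fixes M :: "'a::polish_space measure"
  assumes "standard_prob_space M" "atomless M"
  shows "has_fine_partitions M"
  unfolding has_fine_partitions_def
proof (intro allI impI)
  fix e :: real assume "0 < e"
  interpret prob_space M
    using assms(1) by (simp add: standard_prob_space_def)
  have sets_M: "sets M = sets borel"
    using assms(1) by (simp add: standard_prob_space_def)
  then have space_M: "space M = UNIV"
    by (metis sets_eq_imp_space_eq space_borel)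
  define \<U> where "\<U> = {U. open U \<and> measure M U \<le> e}"
  have "x \<in> \<Union>\<U>" for x
  proof -
    have "{x} \<in> sets M"
      unfolding sets_M by simp
    from atomless_measure_singleton[OF assms(2) this]
    obtain r where "0 < r" "measure M (ball x r) \<le> e"
      using small_measure_ball[OF finite_measure_axioms sets_M _ \<open>0 < e\<close>] by blast
    then show ?thesis
      unfolding \<U>_def by (intro UnionI[of "ball x r"]) auto
  qed
  then have "\<Union>\<U> = UNIV"
    by auto
  moreover obtain \<U>' where "\<U>' \<subseteq> \<U>" "countable \<U>'" "\<Union>\<U>' = \<Union>\<U>"
    using Lindelof[of \<U>] unfolding \<U>_def by blast
  ultimately have \<U>': "\<U>' \<subseteq> \<U>" "countable \<U>'" "\<Union>\<U>' = UNIV"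
    by auto
  then have "\<U>' \<noteq> {}"
    by auto
  define A where "A = from_nat_into \<U>'"
  have "range A = \<U>'"
    using \<U>' \<open>\<U>' \<noteq> {}\<close> by (simp add: A_def range_from_nat_into)
  then have A: "open (A j)" "measure M (A j) \<le> e" for j
    using \<U>'(1) unfolding \<U>_def by auto
  have "range A \<subseteq> sets M"
    unfolding sets_M using A(1) by auto
  moreover have "(\<Union>j. A j) = space M"
    unfolding space_M using \<open>range A = \<U>'\<close> \<U>'(3) by simp
  ultimately show "\<exists>N R. finite_partition M {..<N::nat} R \<and> (\<forall>j<N. measure M (R j) \<le> e)"
    using finite_partition_of_small_cover A(2) \<open>0 < e\<close> by blast
qed

lemma (in finite_measure) has_fine_partitions_step_approximation:
  fixes g :: "'a \<Rightarrow> real" and n :: nat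
  assumes fine: "has_fine_partitions M" and [measurable]: "g \<in> borel_measurable M"
    and g: "\<And>x. x \<in> space M \<Longrightarrow> 0 \<le> g x \<and> g x \<le> 1" and "0 < n"
  obtains I :: "(nat \<times> nat) set" and R c h
  where "finite_partition M I R" "\<And>i. i \<in> I \<Longrightarrow> measure M (R i) \<le> 1 / n"
    "\<And>i. i \<in> I \<Longrightarrow> 0 \<le> c i \<and> c i \<le> 1" "\<And>i x. i \<in> I \<Longrightarrow> x \<in> R i \<Longrightarrow> h x = c i"
    "h \<in> borel_measurable M" "\<And>x. x \<in> space M \<Longrightarrow> \<bar>h x\<bar> \<le> 1 \<and> \<bar>g x - h x\<bar> \<le> 1 / n"
proof -
  have "0 < 1 / real n"
    using \<open>0 < n\<close> by simp
  then have "\<exists>N R. finite_partition M {..<N::nat} R \<and> (\<forall>j<N. measure M (R j) \<le> 1 / n)"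
    by (rule has_fine_partitions_def[THEN iffD1, OF fine, rule_format])
  then obtain N R where R: "finite_partition M {..<N::nat} R" "\<And>j. j < N \<Longrightarrow> measure M (R j) \<le> 1 / n"
    by auto
  define level where "level x = nat \<lfloor>n * g x\<rfloor>" for x
  have [measurable]: "level \<in> measurable M (count_space UNIV)"
    unfolding level_def by measurable
  have level: "real (level x) \<le> n * g x" "n * g x < real (level x) + 1" "level x \<le> n"
    if "x \<in> space M" for x
  proof -
    have "0 \<le> n * g x" "n * g x \<le> n"
      using g[OF that] by (auto simp: mult_left_le)
    then show "real (level x) \<le> n * g x" "n * g x < real (level x) + 1" "level x \<le> n"
      unfolding level_def by linarith+
  qed
  show ?thesis
  proof
    show "finite_partition M ({..n} \<times> {..<N}) (\<lambda>(k, j). {x \<in> space M. level x = k} \<inter> R j)"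
      using level(3) by (intro finite_partition_refine finite_partition_level_sets R(1)) auto
    show "measure M ((\<lambda>(k, j). {x \<in> space M. level x = k} \<inter> R j) a) \<le> 1 / n"
      if a_mem: "a \<in> {..n} \<times> {..<N}" for a
    proof -
      obtain k j where a: "a = (k, j)" "j < N"
        using a_mem by auto
      have "R j \<in> sets M"
        using R(1) \<open>j < N\<close> unfolding finite_partition_def by auto
      then have "measure M ({x \<in> space M. level x = k} \<inter> R j) \<le> measure M (R j)"
        by (intro finite_measure_mono) auto
      then show ?thesis
        using R(2)[OF \<open>j < N\<close>] a(1) by simp
    qed
    show "0 \<le> (\<lambda>(k, j). real k / n) a \<and> (\<lambda>(k, j). real k / n) a \<le> 1" if "a \<in> {..n} \<times> {..<N}" for a
      using that \<open>0 < n\<close> by (auto simp: field_simps)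
    show "(\<lambda>x. real (level x) / n) x = (\<lambda>(k, j). real k / n) a"
      if "a \<in> {..n} \<times> {..<N}" "x \<in> (\<lambda>(k, j). {x \<in> space M. level x = k} \<inter> R j) a" for a x
      using that by auto
    show "(\<lambda>x. real (level x) / n) \<in> borel_measurable M"
      by measurable
    fix x assume x: "x \<in> space M"
    have "g x - real (level x) / n = (n * g x - real (level x)) / n"
      using \<open>0 < n\<close> by (simp add: field_simps)
    moreover have "0 \<le> n * g x - real (level x)" "n * g x - real (level x) \<le> 1"
      using level(1,2)[OF x] by linarith+
    ultimately show "\<bar>real (level x) / n\<bar> \<le> 1 \<and> \<bar>g x - real (level x) / n\<bar> \<le> 1 / n"
      using level(3)[OF x] \<open>0 < n\<close> by (simp add: divide_right_mono)
  qed
qed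

lemma (in pair_sigma_finite) measure_pair_Times:
  assumes "A \<in> sets M1" "B \<in> sets M2"
  shows "measure (M1 \<Otimes>\<^sub>M M2) (A \<times> B) = measure M1 A * measure M2 B"
  using assms by (simp add: measure_def M2.emeasure_pair_measure_Times enn2real_mult)

definition kernel_form ::
    "'a measure \<Rightarrow> ('a \<Rightarrow> 'a \<Rightarrow> real) \<Rightarrow> ('a \<Rightarrow> real) \<Rightarrow> ('a \<Rightarrow> real) \<Rightarrow> real"
  where "kernel_form M K f g = (\<integral>z. f (fst z) * K (fst z) (snd z) * g (snd z) \<partial>(M \<Otimes>\<^sub>M M))"

definition nonneg_on_squares :: "'a measure \<Rightarrow> ('a \<Rightarrow> 'a \<Rightarrow> real) \<Rightarrow> bool" where
  "nonneg_on_squares M K \<longleftrightarrow> (\<forall>U\<in>sets M. 0 \<le> kernel_form M K (indicator U) (indicator U))"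

lemma kernel_form_cong:
  assumes "\<And>x. x \<in> space M \<Longrightarrow> f x = f' x" "\<And>x. x \<in> space M \<Longrightarrow> g x = g' x"
  shows "kernel_form M K f g = kernel_form M K f' g'"
  unfolding kernel_form_def using assms
  by (intro Bochner_Integration.integral_cong) (auto simp: space_pair_measure)

locale bounded_kernel = prob_space M for M :: "'a measure" +
  fixes K :: "'a \<Rightarrow> 'a \<Rightarrow> real" and C :: real
  assumes kernel_measurable[measurable]: "(\<lambda>z. K (fst z) (snd z)) \<in> borel_measurable (M \<Otimes>\<^sub>M M)"
    and kernel_bounded: "\<And>x y. x \<in> space M \<Longrightarrow> y \<in> space M \<Longrightarrow> \<bar>K x y\<bar> \<le> C"
begin

sublocale pair: pair_prob_space M M
  by unfold_locales

lemma kernel_bound_nonneg: "0 \<le> C"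
proof -
  obtain x where "x \<in> space M"
    using not_empty by blast
  then show ?thesis
    using kernel_bounded[of x x] by linarith
qed

lemma integrable_weighted_kernel:
  assumes [measurable]: "f \<in> borel_measurable M" "g \<in> borel_measurable M"
    and "\<And>x. x \<in> space M \<Longrightarrow> \<bar>f x\<bar> \<le> A" "\<And>x. x \<in> space M \<Longrightarrow> \<bar>g x\<bar> \<le> B"
  shows "integrable (M \<Otimes>\<^sub>M M) (\<lambda>z. f (fst z) * K (fst z) (snd z) * g (snd z))"
proof (rule pair.integrable_const_bound[where B = "A * C * B"])
  show "AE z in M \<Otimes>\<^sub>M M. norm (f (fst z) * K (fst z) (snd z) * g (snd z)) \<le> A * C * B"
  proof (rule AE_I2)
    fix z assume "z \<in> space (M \<Otimes>\<^sub>M M)"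
    then have "fst z \<in> space M" "snd z \<in> space M"
      by (auto simp: space_pair_measure)
    then show "norm (f (fst z) * K (fst z) (snd z) * g (snd z)) \<le> A * C * B"
      unfolding real_norm_def abs_mult using assms(3,4) kernel_bounded
      by (intro mult_mono') auto
  qed
qed measurable

lemma integrable_weighted_kernel_indicator:
  assumes "A \<in> sets M" "B \<in> sets M"
  shows "integrable (M \<Otimes>\<^sub>M M) (\<lambda>z. indicator A (fst z) * K (fst z) (snd z) * indicator B (snd z))"
  using assms by (intro integrable_weighted_kernel[where A = 1 and B = 1]) (auto simp: indicator_def)

lemma kernel_form_indicator_le:
  assumes [measurable]: "A \<in> sets M" "B \<in> sets M"
  shows "kernel_form M K (indicator A) (indicator B) \<le> C * measure M A * measure M B"
proof -
  have "kernel_form M K (indicator A) (indicator B) \<le> (\<integral>z. C * indicator (A \<times> B) z \<partial>(M \<Otimes>\<^sub>M M))"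
    unfolding kernel_form_def
  proof (rule integral_mono)
    show "integrable (M \<Otimes>\<^sub>M M) (\<lambda>z. C * indicator (A \<times> B) z)"
      by (rule pair.integrable_const_bound[where B = "\<bar>C\<bar>"]) (auto simp: indicator_def)
    fix z assume "z \<in> space (M \<Otimes>\<^sub>M M)"
    then show "indicator A (fst z) * K (fst z) (snd z) * indicator B (snd z) \<le> C * indicator (A \<times> B) z"
      using kernel_bounded[of "fst z" "snd z"]
      by (auto simp: indicator_def space_pair_measure abs_le_iff)
  qed (rule integrable_weighted_kernel_indicator[OF assms])
  also have "\<dots> = C * measure M A * measure M B"
    by (simp add: pair.measure_pair_Times Times_Int_Times sets.Int_space_eq2 space_pair_measure)
  finally show ?thesis .
qed

lemma kernel_form_step_functions:
  assumes "finite I" "\<And>i. i \<in> I \<Longrightarrow> R i \<in> sets M"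
  shows "kernel_form M K (\<lambda>x. \<Sum>i\<in>I. c i * indicator (R i) x) (\<lambda>x. \<Sum>j\<in>I. d j * indicator (R j) x)
    = (\<Sum>i\<in>I. \<Sum>j\<in>I. c i * d j * kernel_form M K (indicator (R i)) (indicator (R j)))"
proof -
  have "(\<Sum>i\<in>I. c i * indicator (R i) a) * K a b * (\<Sum>j\<in>I. d j * indicator (R j) b)
      = (\<Sum>i\<in>I. \<Sum>j\<in>I. c i * d j * (indicator (R i) a * K a b * indicator (R j) b))" for a b
    by (simp add: sum_distrib_left sum_distrib_right mult_ac)
  moreover have "integrable (M \<Otimes>\<^sub>M M) (\<lambda>z. c i * d j *
      (indicator (R i) (fst z) * K (fst z) (snd z) * indicator (R j) (snd z)))" if "i \<in> I" "j \<in> I" for i j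
    using integrable_weighted_kernel_indicator[OF assms(2)[OF that(1)] assms(2)[OF that(2)]] by simp
  ultimately show ?thesis
    unfolding kernel_form_def by (simp add: integral_sum)
qed

lemma nonneg_on_squares_partition_sums:
  assumes "nonneg_on_squares M K" "finite_partition M I R" "S \<subseteq> I"
  shows "0 \<le> (\<Sum>i\<in>S. \<Sum>j\<in>S. kernel_form M K (indicator (R i)) (indicator (R j)))"
proof -
  have "finite S"
    using assms(2) finite_subset[OF assms(3)] unfolding finite_partition_def by simp
  have sets: "\<And>i. i \<in> S \<Longrightarrow> R i \<in> sets M"
    using assms(2,3) unfolding finite_partition_def by auto
  have "disjoint_family_on R S"
    using assms(2) disjoint_family_on_mono[OF assms(3)] unfolding finite_partition_def by blast
  then have "indicator (\<Union>i\<in>S. R i) = (\<lambda>x. \<Sum>i\<in>S. 1 * indicator (R i) x :: real)"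
    using \<open>finite S\<close> by (intro ext) (simp add: indicator_UN_disjoint)
  moreover have "(\<Union>i\<in>S. R i) \<in> sets M"
    using \<open>finite S\<close> sets by (intro sets.finite_UN)
  ultimately show ?thesis
    using assms(1) kernel_form_step_functions[OF \<open>finite S\<close> sets, where c = "\<lambda>_. 1" and d = "\<lambda>_. 1"]
    unfolding nonneg_on_squares_def by force
qed

lemma kernel_form_partition_diagonal_le:
  assumes nonneg: "nonneg_on_squares M K" and R: "finite_partition M I R"
    and small: "\<And>i. i \<in> I \<Longrightarrow> measure M (R i) \<le> e"
    and c: "\<And>i. i \<in> I \<Longrightarrow> 0 \<le> c i \<and> c i \<le> 1"
  shows "(\<Sum>i\<in>I. (c i - c i * c i) * kernel_form M K (indicator (R i)) (indicator (R i))) \<le> C * e"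
proof -
  have fin: "finite I" and sets: "\<And>i. i \<in> I \<Longrightarrow> R i \<in> sets M"
    and disj: "disjoint_family_on R I" and cover: "(\<Union>i\<in>I. R i) = space M"
    using R unfolding finite_partition_def by auto
  have "(c i - c i * c i) * kernel_form M K (indicator (R i)) (indicator (R i)) \<le> C * e * measure M (R i)"
    if "i \<in> I" for i
  proof -
    have "0 \<le> kernel_form M K (indicator (R i)) (indicator (R i))"
      using nonneg sets[OF that] unfolding nonneg_on_squares_def by blast
    moreover have "0 \<le> c i - c i * c i" "c i - c i * c i \<le> 1"
      using c[OF that] mult_left_le[of "c i" "c i"] zero_le_square[of "c i"] by linarith+
    ultimately have "(c i - c i * c i) * kernel_form M K (indicator (R i)) (indicator (R i))
        \<le> kernel_form M K (indicator (R i)) (indicator (R i))"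
      by (simp add: mult_left_le_one_le)
    also have "\<dots> \<le> C * measure M (R i) * measure M (R i)"
      using sets[OF that] by (intro kernel_form_indicator_le)
    also have "\<dots> \<le> C * e * measure M (R i)"
      using kernel_bound_nonneg small[OF that] by (intro mult_right_mono mult_left_mono) auto
    finally show ?thesis .
  qed
  then have "(\<Sum>i\<in>I. (c i - c i * c i) * kernel_form M K (indicator (R i)) (indicator (R i)))
      \<le> (\<Sum>i\<in>I. C * e * measure M (R i))"
    by (rule sum_mono)
  also have "\<dots> = C * e * measure M (\<Union>i\<in>I. R i)"
    using sets by (simp add: finite_measure_finite_Union[OF fin _ disj] sum_distrib_left image_subset_iff)
  finally show ?thesis
    using cover prob_space by simp
qed

(* Up to the diagonal correction bounded above, the form of a step function is the
   multi-affine function of its values treated in cube_form_nonneg. *)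

lemma kernel_form_step_function_ge:
  assumes nonneg: "nonneg_on_squares M K" and R: "finite_partition M I R"
    and small: "\<And>i. i \<in> I \<Longrightarrow> measure M (R i) \<le> e"
    and c: "\<And>i. i \<in> I \<Longrightarrow> 0 \<le> c i \<and> c i \<le> 1"
    and h: "\<And>i x. i \<in> I \<Longrightarrow> x \<in> R i \<Longrightarrow> h x = c i"
  shows "- (C * e) \<le> kernel_form M K h h"
proof -
  define k where "k i j = kernel_form M K (indicator (R i)) (indicator (R j))" for i j
  have fin: "finite I" and sets: "\<And>i. i \<in> I \<Longrightarrow> R i \<in> sets M"
    using R unfolding finite_partition_def by auto
  have "h x = (\<Sum>i\<in>I. c i * indicator (R i) x)" if "x \<in> space M" for x
    using R that h by (rule finite_partition_step_function)
  then have "kernel_form M K h h = kernel_form M K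
      (\<lambda>x. \<Sum>i\<in>I. c i * indicator (R i) x) (\<lambda>x. \<Sum>j\<in>I. c j * indicator (R j) x)"
    by (intro kernel_form_cong)
  also have "\<dots> = (\<Sum>i\<in>I. \<Sum>j\<in>I. c i * c j * k i j)"
    unfolding k_def by (rule kernel_form_step_functions[OF fin sets])
  also have "\<dots> = (\<Sum>i\<in>I. \<Sum>j\<in>I. (if i = j then c i else c i * c j) * k i j)
      - (\<Sum>i\<in>I. (c i - c i * c i) * k i i)"
  proof -
    have "(\<Sum>j\<in>I. (if i = j then c i else c i * c j) * k i j)
        = (\<Sum>j\<in>I. c i * c j * k i j + (if i = j then (c i - c i * c i) * k i i else 0))" for i
      by (intro sum.cong) (auto simp: algebra_simps)
    then show ?thesis
      using fin by (simp add: sum.distrib)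
  qed
  finally have "kernel_form M K h h = \<dots>" .
  moreover have "0 \<le> (\<Sum>i\<in>I. \<Sum>j\<in>I. (if i = j then c i else c i * c j) * k i j)"
    unfolding k_def using fin nonneg_on_squares_partition_sums[OF nonneg R] c
    by (rule cube_form_nonneg)
  moreover have "(\<Sum>i\<in>I. (c i - c i * c i) * k i i) \<le> C * e"
    unfolding k_def using nonneg R small c by (rule kernel_form_partition_diagonal_le)
  ultimately show ?thesis
    by linarith
qed

lemma kernel_form_perturb:
  assumes [measurable]: "f \<in> borel_measurable M" "g \<in> borel_measurable M"
    and f: "\<And>x. x \<in> space M \<Longrightarrow> \<bar>f x\<bar> \<le> 1" and g: "\<And>x. x \<in> space M \<Longrightarrow> \<bar>g x\<bar> \<le> 1"
    and close: "\<And>x. x \<in> space M \<Longrightarrow> \<bar>f x - g x\<bar> \<le> d"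
  shows "kernel_form M K g g - 2 * d * C \<le> kernel_form M K f f"
proof -
  have "g a * K a b * g b - 2 * d * C \<le> f a * K a b * f b" if "a \<in> space M" "b \<in> space M" for a b
  proof -
    have "\<bar>(f a - g a) * f b\<bar> \<le> d * 1" "\<bar>g a * (f b - g b)\<bar> \<le> 1 * d"
      unfolding abs_mult using f g close that by (intro mult_mono'; simp)+
    then have "\<bar>(f a - g a) * f b + g a * (f b - g b)\<bar> \<le> 2 * d"
      using abs_triangle_ineq[of "(f a - g a) * f b" "g a * (f b - g b)"] by linarith
    then have "\<bar>K a b * ((f a - g a) * f b + g a * (f b - g b))\<bar> \<le> C * (2 * d)"
      unfolding abs_mult[of "K a b"] using kernel_bounded that by (intro mult_mono') auto
    moreover have "f a * K a b * f b - g a * K a b * g b = K a b * ((f a - g a) * f b + g a * (f b - g b))"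
      by (simp add: algebra_simps)
    ultimately show ?thesis
      by (simp add: abs_le_iff algebra_simps)
  qed
  moreover have "integrable (M \<Otimes>\<^sub>M M) (\<lambda>z. f (fst z) * K (fst z) (snd z) * f (snd z))"
    using assms(1) f by (intro integrable_weighted_kernel[where A = 1 and B = 1]) auto
  moreover have "integrable (M \<Otimes>\<^sub>M M) (\<lambda>z. g (fst z) * K (fst z) (snd z) * g (snd z))"
    using assms(2) g by (intro integrable_weighted_kernel[where A = 1 and B = 1]) auto
  ultimately have "(\<integral>z. g (fst z) * K (fst z) (snd z) * g (snd z) - 2 * d * C \<partial>(M \<Otimes>\<^sub>M M))
      \<le> kernel_form M K f f"
    unfolding kernel_form_def by (intro integral_mono) (auto simp: space_pair_measure)
  then show ?thesis
    using \<open>integrable (M \<Otimes>\<^sub>M M) (\<lambda>z. g (fst z) * K (fst z) (snd z) * g (snd z))\<close>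
    by (simp add: kernel_form_def pair.prob_space)
qed

lemma kernel_form_nonneg_unit_interval:
  assumes nonneg: "nonneg_on_squares M K" and fine: "has_fine_partitions M"
    and [measurable]: "g \<in> borel_measurable M" and g: "\<And>x. x \<in> space M \<Longrightarrow> 0 \<le> g x \<and> g x \<le> 1"
  shows "0 \<le> kernel_form M K g g"
proof -
  have "- (3 * C) / real n \<le> kernel_form M K g g" if "0 < n" for n :: nat
  proof -
    obtain I :: "(nat \<times> nat) set" and R c h
      where R: "finite_partition M I R" "\<And>i. i \<in> I \<Longrightarrow> measure M (R i) \<le> 1 / n"
        and c: "\<And>i. i \<in> I \<Longrightarrow> 0 \<le> c i \<and> c i \<le> 1"
        and h: "\<And>i x. i \<in> I \<Longrightarrow> x \<in> R i \<Longrightarrow> h x = c i"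
        and [measurable]: "h \<in> borel_measurable M"
        and close: "\<And>x. x \<in> space M \<Longrightarrow> \<bar>h x\<bar> \<le> 1 \<and> \<bar>g x - h x\<bar> \<le> 1 / n"
      using has_fine_partitions_step_approximation[OF fine assms(3) g \<open>0 < n\<close>] by blast
    have "- (C * (1 / n)) \<le> kernel_form M K h h"
      using nonneg R c h by (rule kernel_form_step_function_ge)
    moreover have "kernel_form M K h h - 2 * (1 / n) * C \<le> kernel_form M K g g"
      using g close by (intro kernel_form_perturb) auto
    ultimately show ?thesis
      by (simp add: field_simps)
  qed
  then show ?thesis
    by (intro LIMSEQ_le_const2[OF lim_const_over_n[of "- (3 * C)"]] exI[of _ 1]) auto
qed

lemma kernel_form_swap:
  assumes symmetric: "\<And>x y. x \<in> space M \<Longrightarrow> y \<in> space M \<Longrightarrow> K x y = K y x"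
    and [measurable]: "f \<in> borel_measurable M" "g \<in> borel_measurable M"
  shows "kernel_form M K f g = kernel_form M K g f"
proof -
  have "kernel_form M K g f = (\<integral>(x, y). g y * K y x * f x \<partial>(M \<Otimes>\<^sub>M M))"
    unfolding kernel_form_def
    by (rule pair.integral_product_swap[symmetric,
          where f = "\<lambda>z. g (fst z) * K (fst z) (snd z) * f (snd z)", simplified]) measurable
  also have "\<dots> = kernel_form M K f g"
    unfolding kernel_form_def using symmetric
    by (intro Bochner_Integration.integral_cong) (auto simp: space_pair_measure)
  finally show ?thesis ..
qed

lemma kernel_form_one_right:
  assumes degree: "AE x in M. (\<integral>y. K x y \<partial>M) = 0"
    and [measurable]: "f \<in> borel_measurable M" and f: "\<And>x. x \<in> space M \<Longrightarrow> \<bar>f x\<bar> \<le> B"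
  shows "kernel_form M K f (\<lambda>_. 1) = 0"
proof -
  have "integrable (M \<Otimes>\<^sub>M M) (\<lambda>z. f (fst z) * K (fst z) (snd z) * 1)"
    using f by (intro integrable_weighted_kernel[where B = 1]) auto
  then have "kernel_form M K f (\<lambda>_. 1) = (\<integral>x. (\<integral>y. f x * K x y \<partial>M) \<partial>M)"
    unfolding kernel_form_def by (simp add: pair.integral_fst'[symmetric])
  also have "\<dots> = 0"
    using degree by (intro integral_eq_zero_AE) (auto elim: eventually_mono)
  finally show ?thesis .
qed

lemma kernel_form_affine:
  assumes symmetric: "\<And>x y. x \<in> space M \<Longrightarrow> y \<in> space M \<Longrightarrow> K x y = K y x"
    and degree: "AE x in M. (\<integral>y. K x y \<partial>M) = 0"
    and [measurable]: "g \<in> borel_measurable M" and g: "\<And>x. x \<in> space M \<Longrightarrow> \<bar>g x\<bar> \<le> B"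
  shows "kernel_form M K (\<lambda>x. s * g x + t) (\<lambda>x. s * g x + t) = s\<^sup>2 * kernel_form M K g g"
proof -
  let ?one = "\<lambda>_ :: 'a. 1 :: real"
  let ?w = "\<lambda>a b z. a (fst z) * K (fst z) (snd z) * b (snd z)"
  have "\<bar>g x\<bar> \<le> max B 1" if "x \<in> space M" for x
    using g[OF that] by simp
  then have int: "integrable (M \<Otimes>\<^sub>M M) (?w a b)" if "a \<in> {g, ?one}" "b \<in> {g, ?one}" for a b
    using that by (auto intro!: integrable_weighted_kernel[where A = "max B 1" and B = "max B 1"])
  have "kernel_form M K (\<lambda>x. s * g x + t) (\<lambda>x. s * g x + t)
      = (\<integral>z. s\<^sup>2 * ?w g g z + s * t * ?w g ?one z + s * t * ?w ?one g z
            + t\<^sup>2 * ?w ?one ?one z \<partial>(M \<Otimes>\<^sub>M M))"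
    unfolding kernel_form_def by (intro Bochner_Integration.integral_cong) (simp_all add: algebra_simps power2_eq_square)
  also have "\<dots> = s\<^sup>2 * kernel_form M K g g + s * t * kernel_form M K g ?one
      + s * t * kernel_form M K ?one g + t\<^sup>2 * kernel_form M K ?one ?one"
    unfolding kernel_form_def using int[of g g] int[of g ?one] int[of ?one g] int[of ?one ?one] by simp
  also have "kernel_form M K ?one g = kernel_form M K g ?one"
    using symmetric by (intro kernel_form_swap) auto
  also have "kernel_form M K g ?one = 0"
    by (rule kernel_form_one_right[OF degree _ g]) measurable
  also have "kernel_form M K ?one ?one = 0"
    by (rule kernel_form_one_right[OF degree, where B = 1]) auto
  finally show ?thesis
    by simp
qed

theorem kernel_form_nonneg:
  assumes "nonneg_on_squares M K" "has_fine_partitions M"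
    and symmetric: "\<And>x y. x \<in> space M \<Longrightarrow> y \<in> space M \<Longrightarrow> K x y = K y x"
    and degree: "AE x in M. (\<integral>y. K x y \<partial>M) = 0"
    and [measurable]: "f \<in> borel_measurable M" and f: "\<And>x. x \<in> space M \<Longrightarrow> \<bar>f x\<bar> \<le> B"
  shows "0 \<le> kernel_form M K f f"
proof -
  define b where "b = \<bar>B\<bar> + 1"
  define g where "g x = (f x + b) / (2 * b)" for x
  have "0 < b"
    by (simp add: b_def)
  have [measurable]: "g \<in> borel_measurable M"
    unfolding g_def by measurable
  have g: "0 \<le> g x \<and> g x \<le> 1" if "x \<in> space M" for x
    using f[OF that] \<open>0 < b\<close> unfolding g_def b_def by (auto simp: field_simps abs_le_iff)
  have "kernel_form M K f f = kernel_form M K (\<lambda>x. (2 * b) * g x + - b) (\<lambda>x. (2 * b) * g x + - b)"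
    using \<open>0 < b\<close> by (intro kernel_form_cong) (simp_all add: g_def field_simps)
  also have "\<dots> = (2 * b)\<^sup>2 * kernel_form M K g g"
    using symmetric degree by (rule kernel_form_affine[where B = 1]) (use g in auto)
  finally show ?thesis
    using kernel_form_nonneg_unit_interval[OF assms(1,2) _ g] by simp
qed

end

lemma graphon_bounded_kernel:
  assumes "prob_space M" "graphon M W"
  shows "bounded_kernel M (\<lambda>x y. W x y - p) (1 + \<bar>p\<bar>)"
proof -
  have [measurable]: "(\<lambda>z. W (fst z) (snd z)) \<in> borel_measurable (M \<Otimes>\<^sub>M M)"
    using assms(2) by (simp add: graphon_def)
  have "\<bar>W x y - p\<bar> \<le> 1 + \<bar>p\<bar>" if "x \<in> space M" "y \<in> space M" for x y
  proof -
    have "0 \<le> W x y" "W x y \<le> 1"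
      using assms(2) that unfolding graphon_def by auto
    then show ?thesis
      using abs_ge_self[of p] abs_ge_minus_self[of p] by (simp add: abs_le_iff)
  qed
  then show ?thesis
    using assms(1) unfolding bounded_kernel_def bounded_kernel_axioms_def by auto
qed

lemma locally_dense_nonneg_on_squares:
  assumes "prob_space M" "graphon M W" "locally_dense M p W"
  shows "nonneg_on_squares M (\<lambda>x y. W x y - p)"
  unfolding nonneg_on_squares_def
proof
  fix U assume [measurable]: "U \<in> sets M"
  interpret bounded_kernel M "\<lambda>x y. W x y - p" "1 + \<bar>p\<bar>"
    using assms(1,2) by (rule graphon_bounded_kernel)
  have [measurable]: "(\<lambda>z. W (fst z) (snd z)) \<in> borel_measurable (M \<Otimes>\<^sub>M M)"
    using assms(2) by (simp add: graphon_def)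
  have "integrable (M \<Otimes>\<^sub>M M) (\<lambda>z. indicator (U \<times> U) z * W (fst z) (snd z))"
    using assms(2) unfolding graphon_def
    by (intro pair.integrable_const_bound[where B = 1]) (auto simp: indicator_def space_pair_measure)
  moreover have "integrable (M \<Otimes>\<^sub>M M) (\<lambda>z. p * indicator (U \<times> U) z)"
    by (intro pair.integrable_const_bound[where B = "\<bar>p\<bar>"]) (auto simp: indicator_def)
  moreover have "kernel_form M (\<lambda>x y. W x y - p) (indicator U) (indicator U)
      = (\<integral>z. indicator (U \<times> U) z * W (fst z) (snd z) - p * indicator (U \<times> U) z \<partial>(M \<Otimes>\<^sub>M M))"
    unfolding kernel_form_def by (intro Bochner_Integration.integral_cong) (auto simp: indicator_def)
  moreover have "measure (M \<Otimes>\<^sub>M M) (U \<times> U) = (measure M U)\<^sup>2"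
    by (simp add: pair.measure_pair_Times power2_eq_square)
  ultimately have "kernel_form M (\<lambda>x y. W x y - p) (indicator U) (indicator U)
      = (\<integral>z. indicator (U \<times> U) z * W (fst z) (snd z) \<partial>(M \<Otimes>\<^sub>M M)) - p * (measure M U)\<^sup>2"
    by (simp add: sets.Int_space_eq2)
  then show "0 \<le> kernel_form M (\<lambda>x y. W x y - p) (indicator U) (indicator U)"
    using assms(3) \<open>U \<in> sets M\<close> unfolding locally_dense_def by simp
qed

lemma regular_graphon_degree:
  assumes "prob_space M" "graphon M W" "regular_graphon M p W"
  shows "AE x in M. (\<integral>y. W x y - p \<partial>M) = 0"
  using assms(3) AE_space unfolding regular_graphon_def
proof (eventually_elim)
  case (elim x)
  interpret prob_space M by fact
  have "(\<lambda>z. W (fst z) (snd z)) \<in> borel_measurable (M \<Otimes>\<^sub>M M)"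
    using assms(2) by (simp add: graphon_def)
  then have "integrable M (W x)"
    using assms(2) elim(2) unfolding graphon_def
    by (intro integrable_const_bound[where B = 1]) (auto dest: measurable_Pair2[where x = x])
  then show ?case
    using elim(1) by (simp add: prob_space)
qed

theorem corollary2p15:
  fixes M :: "'a::polish_space measure" and W :: "'a \<Rightarrow> 'a \<Rightarrow> real" and p :: real
  assumes "standard_prob_space M" and "atomless M"
    and "graphon M W" and "locally_dense M p W" and "regular_graphon M p W"
  shows "psd_kernel M (\<lambda>x y. W x y - p)"
proof -
  have M: "prob_space M"
    using assms(1) by (simp add: standard_prob_space_def)
  interpret bounded_kernel M "\<lambda>x y. W x y - p" "1 + \<bar>p\<bar>"
    using M assms(3) by (rule graphon_bounded_kernel)
  have symmetric: "\<And>x y. x \<in> space M \<Longrightarrow> y \<in> space M \<Longrightarrow> W x y - p = W y x - p"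
    using assms(3) unfolding graphon_def by auto
  note nonneg = locally_dense_nonneg_on_squares[OF M assms(3,4)]
  note fine = standard_atomless_has_fine_partitions[OF assms(1,2)]
  note degree = regular_graphon_degree[OF M assms(3,5)]
  have "kernel M (\<lambda>x y. W x y - p)"
    unfolding kernel_def using kernel_measurable kernel_bounded symmetric by blast
  moreover have "0 \<le> kernel_form M (\<lambda>x y. W x y - p) f f"
    if "f \<in> borel_measurable M" "\<forall>x\<in>space M. \<bar>f x\<bar> \<le> B" for f B
    using kernel_form_nonneg[OF nonneg fine symmetric degree] that by blast
  ultimately show ?thesis
    unfolding psd_kernel_def kernel_form_def by auto
qed

end
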